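(* The map $f:\mathbb{C}H^n\to\mathbb{C}^n$ given by $$f(z_1,\dots,z_n)=\left(\frac{z_1}{\sqrt{1-\sum_{i=1}^n|z_i|^2}},\dots,\frac{z_n}{\sqrt{1-\sum_{i=1}^n|z_i|^2}}\right)$$ is a special global diffeomorphism satisfying $f^*(\omega_0)=\omega_{hyp}$ and $f^*(\omega_{FS})=\omega_0$, where in the second equation $\omega_0$ denotes the restriction of the flat form to $\mathbb{C}H^n\subset\mathbb{C}^n$ and $\omega_{FS}$ is the restriction of the Fubini–Study form to the affine chart $\mathbb{C}^n=\{Z_0\neq0\}\subset\mathbb{C}P^n$.
   Context: $\mathbb{C}H^n=\{z\in\mathbb{C}^n:\sum_j|z_j|^2<1\}$ with $\omega_{hyp}=-\frac{i}{2}\partial\bar\partial\log(1-\sum_j|z_j|^2)$; $\omega_0=\frac{i}{2}\sum_j dz_j\wedge d\bar z_j$; on the affine chart $Z_0\neq0$ of $\mathbb{C}P^n$ with coordinates $z_j=Z_j/Z_0$, $\omega_{FS}=\frac{i}{2}\partial\bar\partial\log(1+\sum_j|z_j|^2)$. A smooth map $\Psi$ between domains of $\mathbb{C}^n$ is called special if it has the form $\Psi(z)=(\tilde\psi_1(x)z_1,\dots,\tilde\psi_n(x)z_n)$ with $x_j=|z_j|^2$ and $\tilde\psi_j$ real-valued functions of $x=(x_1,\dots,x_n)$. *)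

theory Defs
  imports "HOL-Analysis.Analysis"
begin

fun Ck_on :: "nat \<Rightarrow> ('a::real_normed_vector \<Rightarrow> 'b::real_normed_vector) \<Rightarrow> 'a set \<Rightarrow> bool" where
  "Ck_on 0 f S = continuous_on S f"
| "Ck_on (Suc k) f S =
     (f differentiable_on S \<and> (\<forall>v. Ck_on k (\<lambda>x. frechet_derivative f (at x) v) S))"

definition smooth_on :: "('a::real_normed_vector \<Rightarrow> 'b::real_normed_vector) \<Rightarrow> 'a set \<Rightarrow> bool" where
  "smooth_on f S \<longleftrightarrow> (\<forall>k. Ck_on k f S)"

definition diffeo_between :: "('a::real_normed_vector \<Rightarrow> 'b::real_normed_vector) \<Rightarrow> 'a set \<Rightarrow> 'b set \<Rightarrow> bool" where
  "diffeo_between f U V \<longleftrightarrow> bij_betw f U V \<and> smooth_on f U \<and> smooth_on (inv_into U f) V"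

definition sqnorm :: "complex^'n::finite \<Rightarrow> real" where
  "sqnorm z = (\<Sum>j\<in>UNIV. (cmod (z$j))^2)"

definition CH :: "(complex^'n::finite) set" where
  "CH = {z. sqnorm z < 1}"

definition fmap :: "complex^'n::finite \<Rightarrow> complex^'n" where
  "fmap z = (\<chi> j. z$j / complex_of_real (sqrt (1 - sqnorm z)))"

definition special_on :: "(complex^'n::finite) set \<Rightarrow> (complex^'n \<Rightarrow> complex^'n) \<Rightarrow> bool" where
  "special_on U \<Psi> \<longleftrightarrow> smooth_on \<Psi> U \<and>
     (\<exists>\<psi> :: 'n \<Rightarrow> real^'n \<Rightarrow> real.
        \<forall>z\<in>U. \<Psi> z = (\<chi> j. complex_of_real (\<psi> j (\<chi> i. (cmod (z$i))^2)) * z$j))"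

type_synonym 'n form2 = "complex^'n \<Rightarrow> complex^'n \<Rightarrow> complex^'n \<Rightarrow> complex"

definition dirderiv :: "(complex^'n::finite \<Rightarrow> complex) \<Rightarrow> complex^'n \<Rightarrow> complex^'n \<Rightarrow> complex" where
  "dirderiv g p w = frechet_derivative g (at p) w"

definition wirt_z :: "'n::finite \<Rightarrow> (complex^'n \<Rightarrow> complex) \<Rightarrow> complex^'n \<Rightarrow> complex" where
  "wirt_z j g p = (dirderiv g p (axis j 1) - \<i> * dirderiv g p (axis j \<i>)) / 2"

definition wirt_zbar :: "'n::finite \<Rightarrow> (complex^'n \<Rightarrow> complex) \<Rightarrow> complex^'n \<Rightarrow> complex" where
  "wirt_zbar j g p = (dirderiv g p (axis j 1) + \<i> * dirderiv g p (axis j \<i>)) / 2"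

definition dz :: "'n::finite \<Rightarrow> complex^'n \<Rightarrow> complex" where "dz j u = u$j"
definition dzbar :: "'n::finite \<Rightarrow> complex^'n \<Rightarrow> complex" where "dzbar j u = cnj (u$j)"
definition wedge :: "('a \<Rightarrow> complex) \<Rightarrow> ('a \<Rightarrow> complex) \<Rightarrow> 'a \<Rightarrow> 'a \<Rightarrow> complex" where
  "wedge \<alpha> \<beta> u v = \<alpha> u * \<beta> v - \<alpha> v * \<beta> u"

definition i_ddbar :: "(complex^'n::finite \<Rightarrow> real) \<Rightarrow> 'n form2" where
  "i_ddbar \<phi> p u v = \<i> / 2 * (\<Sum>j\<in>UNIV. \<Sum>k\<in>UNIV.
      wirt_z j (wirt_zbar k (\<lambda>x. complex_of_real (\<phi> x))) p * wedge (dz j) (dzbar k) u v)"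

definition omega0 :: "'n::finite form2" where
  "omega0 p u v = \<i> / 2 * (\<Sum>j\<in>UNIV. wedge (dz j) (dzbar j) u v)"

definition omega_hyp :: "'n::finite form2" where
  "omega_hyp p u v = - i_ddbar (\<lambda>z. ln (1 - sqnorm z)) p u v"

definition omega_FS :: "'n::finite form2" where
  "omega_FS = i_ddbar (\<lambda>z. ln (1 + sqnorm z))"

definition pullback :: "(complex^'n::finite \<Rightarrow> complex^'n) \<Rightarrow> 'n form2 \<Rightarrow> 'n form2" where
  "pullback F \<omega> p u v =
     \<omega> (F p) (frechet_derivative F (at p) u) (frechet_derivative F (at p) v)"

end

(*
  The map f is the radial map z \<mapsto> \<phi>(|z|^2) z with \<phi>(t) = 1/sqrt(1 - t), and its inverse
  is the radial map for 1/sqrt(1 + t). Both are smooth because the functions built from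
  constants, linear functionals and 1/sqrt(c + s|z|^2) by sums and products form a class
  that is closed under taking directional derivatives.

  All forms involved are U(n)-invariant: for a potential g(|z|^2) the form (i/2) ddbar g(|z|^2)
  at z is Im(g'(|z|^2) <u,v> + g''(|z|^2) <u,z><z,v>), and pulling a form
  Im(a <u,v> + b <u,w><w,v>) back along a radial map gives again a form of this shape whose
  coefficients are explicit in a, b, \<phi> and \<phi>'. Each pullback identity thus reduces to
  two identities between real coefficients, rational in R = sqrt(1 - |z|^2).
*)

theory Submission
  imports Defs
begin

section \<open>Smoothness from derivative-closed classes\<close>

lemma Ck_on_transform_open:
  assumes "open S" "\<And>x. x \<in> S \<Longrightarrow> f x = g x" "Ck_on k f S"
  shows "Ck_on k g S"
  using assms(2,3)
proof (induction k arbitrary: f g)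
  case 0
  then show ?case using continuous_on_cong[of S S f g] by simp
next
  case (Suc k)
  have f_diff: "f differentiable at x" if "x \<in> S" for x
    using Suc.prems(2) that differentiable_on_eq_differentiable_at[OF assms(1)] by auto
  have "g differentiable at x" if x: "x \<in> S" for x
  proof -
    obtain D where "(f has_derivative D) (at x)"
      using f_diff[OF x] unfolding differentiable_def by blast
    then have "(g has_derivative D) (at x)"
      by (rule has_derivative_transform_within_open[OF _ assms(1) x]) (rule Suc.prems(1))
    then show ?thesis unfolding differentiable_def by blast
  qed
  then have "g differentiable_on S"
    using differentiable_on_eq_differentiable_at[OF assms(1)] by blast
  moreover have "Ck_on k (\<lambda>x. frechet_derivative g (at x) v) S" for v
  proof (rule Suc.IH)
    show "frechet_derivative f (at x) v = frechet_derivative g (at x) v" if "x \<in> S" for x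
      using frechet_derivative_transform_within_open[OF f_diff[OF that] assms(1) that Suc.prems(1)]
      by simp
    show "Ck_on k (\<lambda>x. frechet_derivative f (at x) v) S"
      using Suc.prems(2) by simp
  qed
  ultimately show ?case by simp
qed

definition derivatives_in :: "'a::real_normed_vector set \<Rightarrow> (('a \<Rightarrow> 'b::real_normed_vector) \<Rightarrow> bool)
    \<Rightarrow> ('a \<Rightarrow> 'b) \<Rightarrow> bool" where
  "derivatives_in S P f \<longleftrightarrow>
    (\<exists>f'. (\<forall>x\<in>S. (f has_derivative f' x) (at x)) \<and> (\<forall>h. P (\<lambda>x. f' x h)))"

lemma smooth_on_derivative_closed_class:
  assumes "open S" "P f" and closed: "\<And>f. P f \<Longrightarrow> derivatives_in S P f"
  shows "smooth_on f S"
  unfolding smooth_on_def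
proof
  fix k show "Ck_on k f S"
    using assms(2)
  proof (induction k arbitrary: f)
    case 0
    then obtain f' where "\<forall>x\<in>S. (f has_derivative f' x) (at x)"
      using closed unfolding derivatives_in_def by blast
    then show ?case
      unfolding Ck_on.simps by (meson continuous_at_imp_continuous_on has_derivative_continuous)
  next
    case (Suc k)
    then obtain f' where f': "\<forall>x\<in>S. (f has_derivative f' x) (at x)" "\<forall>h. P (\<lambda>x. f' x h)"
      using closed unfolding derivatives_in_def by blast
    then have "f differentiable_on S"
      by (meson differentiableI differentiable_at_imp_differentiable_on)
    moreover have "Ck_on k (\<lambda>x. frechet_derivative f (at x) h) S" for h
    proof (rule Ck_on_transform_open[OF assms(1) _ Suc.IH[OF f'(2)[rule_format]]])
      show "f' x h = frechet_derivative f (at x) h" if "x \<in> S" for x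
        using f'(1) that frechet_derivative_at by fastforce
    qed
    ultimately show ?case by simp
  qed
qed

lemma derivatives_in_add:
  assumes "derivatives_in S P f" "derivatives_in S P g"
    and "\<And>f g. P f \<Longrightarrow> P g \<Longrightarrow> P (\<lambda>x. f x + g x)"
  shows "derivatives_in S P (\<lambda>x. f x + g x)"
proof -
  obtain f' g' where
    f': "\<forall>x\<in>S. (f has_derivative f' x) (at x)" "\<forall>h. P (\<lambda>x. f' x h)" and
    g': "\<forall>x\<in>S. (g has_derivative g' x) (at x)" "\<forall>h. P (\<lambda>x. g' x h)"
    using assms(1,2) unfolding derivatives_in_def by blast
  show ?thesis
    unfolding derivatives_in_def
    by (intro exI[of _ "\<lambda>x h. f' x h + g' x h"] conjI ballI allI has_derivative_add assms(3)
        f'[rule_format] g'[rule_format])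
qed

lemma derivatives_in_scaleR:
  assumes "derivatives_in S P f" "derivatives_in S Q F" "P f" "Q F"
    and "\<And>F G. Q F \<Longrightarrow> Q G \<Longrightarrow> Q (\<lambda>x. F x + G x)"
    and "\<And>f F. P f \<Longrightarrow> Q F \<Longrightarrow> Q (\<lambda>x. f x *\<^sub>R F x)"
  shows "derivatives_in S Q (\<lambda>x. f x *\<^sub>R F x)"
proof -
  obtain f' F' where
    f': "\<forall>x\<in>S. (f has_derivative f' x) (at x)" "\<forall>h. P (\<lambda>x. f' x h)" and
    F': "\<forall>x\<in>S. (F has_derivative F' x) (at x)" "\<forall>h. Q (\<lambda>x. F' x h)"
    using assms(1,2) unfolding derivatives_in_def by blast
  show ?thesis
    unfolding derivatives_in_def
    by (intro exI[of _ "\<lambda>x h. f x *\<^sub>R F' x h + f' x h *\<^sub>R F x"] conjI ballI allI has_derivative_scaleR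
        assms(3-6) f'[rule_format] F'[rule_format])
qed

section \<open>Radial maps\<close>

definition radial_map :: "(real \<Rightarrow> real) \<Rightarrow> 'a::real_inner \<Rightarrow> 'a" where
  "radial_map \<phi> z = \<phi> ((norm z)\<^sup>2) *\<^sub>R z"

lemma norm_radial_map: "(norm (radial_map \<phi> z))\<^sup>2 = (\<phi> ((norm z)\<^sup>2))\<^sup>2 * (norm z)\<^sup>2"
  by (simp add: radial_map_def power_mult_distrib)

lemma radial_map_radial_map:
  "radial_map \<psi> (radial_map \<phi> z)
    = (\<psi> ((\<phi> ((norm z)\<^sup>2))\<^sup>2 * (norm z)\<^sup>2) * \<phi> ((norm z)\<^sup>2)) *\<^sub>R z"
  unfolding radial_map_def[of \<psi>] norm_radial_map by (simp add: radial_map_def)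

lemma has_derivative_norm_power2:
  fixes p :: "'a::real_inner"
  shows "((\<lambda>z. (norm z)\<^sup>2) has_derivative (\<lambda>h. 2 * inner p h)) (at p)"
  unfolding power2_norm_eq_inner
  by (rule has_derivative_eq_rhs[OF has_derivative_inner[OF has_derivative_ident has_derivative_ident]])
    (simp add: fun_eq_iff inner_commute)

lemma has_derivative_radial_map:
  fixes p :: "'a::real_inner"
  assumes "(\<phi> has_real_derivative \<phi>') (at ((norm p)\<^sup>2))"
  shows "(radial_map \<phi> has_derivative
    (\<lambda>u. \<phi> ((norm p)\<^sup>2) *\<^sub>R u + (2 * \<phi>' * inner p u) *\<^sub>R p)) (at p)"
  unfolding radial_map_def [abs_def]
  by (rule has_derivative_eq_rhs[OF has_derivative_scaleR[OF
        DERIV_compose_FDERIV[OF assms has_derivative_norm_power2] has_derivative_ident]])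
    (simp add: fun_eq_iff)

inductive inv_sqrt_algebra :: "real \<Rightarrow> real \<Rightarrow> ('a::real_inner \<Rightarrow> real) \<Rightarrow> bool" for c s where
  "inv_sqrt_algebra c s (\<lambda>z. a)"
| "inv_sqrt_algebra c s (\<lambda>z. inner z w)"
| "inv_sqrt_algebra c s (\<lambda>z. 1 / sqrt (c + s * (norm z)\<^sup>2))"
| "inv_sqrt_algebra c s f \<Longrightarrow> inv_sqrt_algebra c s g \<Longrightarrow> inv_sqrt_algebra c s (\<lambda>z. f z + g z)"
| "inv_sqrt_algebra c s f \<Longrightarrow> inv_sqrt_algebra c s g \<Longrightarrow> inv_sqrt_algebra c s (\<lambda>z. f z * g z)"

inductive inv_sqrt_module :: "real \<Rightarrow> real \<Rightarrow> ('a::real_inner \<Rightarrow> 'a) \<Rightarrow> bool" for c s where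
  "inv_sqrt_module c s (\<lambda>z. v)"
| "inv_sqrt_module c s (\<lambda>z. z)"
| "inv_sqrt_module c s F \<Longrightarrow> inv_sqrt_module c s G \<Longrightarrow> inv_sqrt_module c s (\<lambda>z. F z + G z)"
| "inv_sqrt_algebra c s f \<Longrightarrow> inv_sqrt_module c s F
    \<Longrightarrow> inv_sqrt_module c s (\<lambda>z. f z *\<^sub>R F z)"

lemma has_derivative_inv_sqrt:
  fixes p :: "'a::real_inner"
  assumes "0 < c + s * (norm p)\<^sup>2"
  shows "((\<lambda>z. 1 / sqrt (c + s * (norm z)\<^sup>2)) has_derivative
    (\<lambda>h. - s * inner p h * (1 / sqrt (c + s * (norm p)\<^sup>2))^3)) (at p)"
proof -
  let ?G = "c + s * (norm p)\<^sup>2"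
  have "((\<lambda>z. c + s * (norm z)\<^sup>2) has_derivative (\<lambda>h. s * (2 * inner p h))) (at p)"
    by (rule has_derivative_eq_rhs[OF has_derivative_add[OF has_derivative_const
          has_derivative_mult_right[OF has_derivative_norm_power2]]]) simp
  then have sqrt_deriv: "((\<lambda>z. sqrt (c + s * (norm z)\<^sup>2)) has_derivative
      (\<lambda>h. s * (2 * inner p h) * (inverse (sqrt ?G) / 2))) (at p)"
    using assms by (rule has_derivative_real_sqrt[rotated])
  have "sqrt ?G \<noteq> 0"
    using assms by simp
  from Deriv.has_derivative_inverse[OF this sqrt_deriv] show ?thesis
    unfolding inverse_eq_divide
    by (rule has_derivative_eq_rhs) (simp add: fun_eq_iff field_simps power3_eq_cube)
qed

lemma inv_sqrt_algebra_derivatives_in: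
  assumes "inv_sqrt_algebra c s f"
  shows "derivatives_in {z. 0 < c + s * (norm z)\<^sup>2} (inv_sqrt_algebra c s) f"
  using assms
proof induction
  case (1 a)
  show ?case
    unfolding derivatives_in_def by (intro exI[of _ "\<lambda>x h. 0"]) (auto intro: inv_sqrt_algebra.intros)
next
  case (2 w)
  show ?case
    unfolding derivatives_in_def
    by (intro exI[of _ "\<lambda>x h. inner h w"])
      (auto intro: inv_sqrt_algebra.intros has_derivative_inner_left[OF has_derivative_ident])
next
  case 3
  show ?case
    unfolding derivatives_in_def
  proof (intro exI[of _ "\<lambda>x h. - s * inner x h * (1 / sqrt (c + s * (norm x)\<^sup>2))^3"] conjI ballI allI)
    show "((\<lambda>z. 1 / sqrt (c + s * (norm z)\<^sup>2)) has_derivative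
        (\<lambda>h. - s * inner x h * (1 / sqrt (c + s * (norm x)\<^sup>2))^3)) (at x)"
      if "x \<in> {z. 0 < c + s * (norm z)\<^sup>2}" for x :: 'a
      using that by (intro has_derivative_inv_sqrt) simp
    show "inv_sqrt_algebra c s (\<lambda>x. - s * inner x h * (1 / sqrt (c + s * (norm x)\<^sup>2))^3)" for h :: 'a
      unfolding power3_eq_cube by (intro inv_sqrt_algebra.intros)
  qed
next
  case (4 f g)
  then show ?case
    by (intro derivatives_in_add inv_sqrt_algebra.intros)
next
  case (5 f g)
  then show ?case
    using derivatives_in_scaleR[of _ "inv_sqrt_algebra c s" f "inv_sqrt_algebra c s" g]
    by (simp add: inv_sqrt_algebra.intros)
qed

lemma inv_sqrt_module_derivatives_in:
  assumes "inv_sqrt_module c s F"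
  shows "derivatives_in {z. 0 < c + s * (norm z)\<^sup>2} (inv_sqrt_module c s) F"
  using assms
proof induction
  case (1 v)
  show ?case
    unfolding derivatives_in_def by (intro exI[of _ "\<lambda>x h. 0"]) (auto intro: inv_sqrt_module.intros)
next
  case 2
  show ?case
    unfolding derivatives_in_def by (intro exI[of _ "\<lambda>x h. h"]) (auto intro: inv_sqrt_module.intros)
next
  case (3 F G)
  then show ?case
    by (intro derivatives_in_add inv_sqrt_module.intros)
next
  case (4 f F)
  then show ?case
    by (intro derivatives_in_scaleR[OF inv_sqrt_algebra_derivatives_in] inv_sqrt_module.intros)
qed

lemma smooth_on_radial_map_inv_sqrt:
  "smooth_on (radial_map (\<lambda>t. 1 / sqrt (c + s * t)) :: 'a::real_inner \<Rightarrow> 'a)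
    {z. 0 < c + s * (norm z)\<^sup>2}"
proof (rule smooth_on_derivative_closed_class[of _ "inv_sqrt_module c s"])
  show "open {z::'a. 0 < c + s * (norm z)\<^sup>2}"
    by (intro open_Collect_less continuous_intros)
  show "inv_sqrt_module c s (radial_map (\<lambda>t. 1 / sqrt (c + s * t)) :: 'a \<Rightarrow> 'a)"
    unfolding radial_map_def [abs_def] by (intro inv_sqrt_module.intros inv_sqrt_algebra.intros)
qed (rule inv_sqrt_module_derivatives_in)

section \<open>U(n)-invariant forms on C^n\<close>

definition cinner :: "complex^'n::finite \<Rightarrow> complex^'n \<Rightarrow> complex" where
  "cinner u v = (\<Sum>j\<in>UNIV. cnj (u$j) * v$j)"

lemma cnj_cinner: "cnj (cinner u v) = cinner v u"
  by (simp add: cinner_def mult.commute)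

lemma cinner_add_left: "cinner (u + w) v = cinner u v + cinner w v"
  by (simp add: cinner_def distrib_right sum.distrib)

lemma cinner_add_right: "cinner u (v + w) = cinner u v + cinner u w"
  by (simp add: cinner_def distrib_left sum.distrib)

lemma cinner_scaleR_left: "cinner (r *\<^sub>R u) v = of_real r * cinner u v"
  unfolding cinner_def vector_scaleR_component by (simp add: scaleR_conv_of_real sum_distrib_left mult.assoc)

lemma cinner_scaleR_right: "cinner u (r *\<^sub>R v) = of_real r * cinner u v"
  unfolding cinner_def vector_scaleR_component by (simp add: scaleR_conv_of_real sum_distrib_left mult.left_commute)

lemma Re_cinner: "Re (cinner u v) = inner u v"
  by (simp add: cinner_def inner_vec_def inner_complex_def Re_sum)

lemma of_real_inner_eq_cinner: "of_real (2 * inner u v) = cinner u v + cinner v u"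
proof -
  have "cinner u v + cinner v u = of_real (2 * Re (cinner u v))"
    by (metis cnj_cinner complex_add_cnj)
  then show ?thesis by (simp add: Re_cinner)
qed

lemma sqnorm_eq_norm_power2: "sqnorm z = (norm z)\<^sup>2"
  by (simp add: sqnorm_def norm_vec_def L2_set_def sum_nonneg)

lemma cinner_self: "cinner z z = of_real ((norm z)\<^sup>2)"
  unfolding cinner_def sqnorm_eq_norm_power2[symmetric] sqnorm_def of_real_sum
  by (simp add: complex_mult_cnj cmod_power2 mult.commute)

lemma of_real_Im_eq: "of_real (Im z) = \<i> / 2 * (cnj z - z)"
  by (simp add: complex_eq_iff)

lemma wirtinger_of_has_derivative:
  assumes "(h has_derivative D) (at p)"
    and "\<And>w. D w = (\<Sum>l\<in>UNIV. a l * w$l + b l * cnj (w$l))"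
  shows "wirt_z j h p = a j" and "wirt_zbar j h p = b j"
proof -
  have "dirderiv h p (axis j c) = a j * c + b j * cnj c" for c
  proof -
    have "dirderiv h p (axis j c) = D (axis j c)"
      unfolding dirderiv_def using assms(1) frechet_derivative_at by metis
    also have "\<dots> = (\<Sum>l\<in>UNIV. if l = j then a j * c + b j * cnj c else 0)"
      unfolding assms(2) by (intro sum.cong) (auto simp: axis_def)
    finally show ?thesis by simp
  qed
  then show "wirt_z j h p = a j" and "wirt_zbar j h p = b j"
    unfolding wirt_z_def wirt_zbar_def by (simp_all add: field_simps)
qed

definition radial_kahler :: "real \<Rightarrow> real \<Rightarrow> 'n::finite form2" where
  "radial_kahler a b p u v = of_real (Im (of_real a * cinner u v + of_real b * (cinner u p * cinner p v)))"

lemma omega0_eq_radial_kahler: "omega0 p u v = radial_kahler 1 0 p u v"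
proof -
  have "(\<Sum>j\<in>UNIV. wedge (dz j) (dzbar j) u v) = cnj (cinner u v) - cinner u v"
    by (simp add: wedge_def dz_def dzbar_def cinner_def sum_subtractf mult.commute)
  then show ?thesis
    unfolding omega0_def radial_kahler_def by (simp add: of_real_Im_eq)
qed

lemma sum_wedge_eq_radial_kahler:
  "\<i> / 2 * (\<Sum>j\<in>UNIV. \<Sum>k\<in>UNIV. ((if j = k then of_real A else 0) + of_real B * cnj (p$j) * p$k)
      * wedge (dz j) (dzbar k) u v)
    = radial_kahler A B p u v"
proof -
  have "(\<Sum>j\<in>UNIV. \<Sum>k\<in>UNIV. (if j = k then of_real A else 0) * wedge (dz j) (dzbar k) u v)
      = of_real A * (\<Sum>j\<in>UNIV. wedge (dz j) (dzbar j) u v)"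
    by (simp add: if_distrib[of "\<lambda>x. x * _"] sum_distrib_left cong: if_cong)
  also have "\<dots> = of_real A * (cinner v u - cinner u v)"
    by (simp add: wedge_def dz_def dzbar_def cinner_def sum_subtractf mult.commute)
  finally have diagonal: "(\<Sum>j\<in>UNIV. \<Sum>k\<in>UNIV. (if j = k then of_real A else 0) * wedge (dz j) (dzbar k) u v)
      = of_real A * (cinner v u - cinner u v)" .
  have rank_one: "(\<Sum>j\<in>UNIV. \<Sum>k\<in>UNIV. of_real B * cnj (p$j) * p$k * wedge (dz j) (dzbar k) u v)
      = of_real B * (cinner p u * cinner v p - cinner p v * cinner u p)"
    by (simp add: wedge_def dz_def dzbar_def cinner_def sum_product sum_subtractf sum_distrib_left
        algebra_simps)
  show ?thesis
    unfolding radial_kahler_def of_real_Im_eq distrib_right sum.distrib diagonal rank_one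
    by (simp add: cnj_cinner algebra_simps)
qed

lemma has_derivative_of_real_radial:
  fixes p :: "complex^'n::finite"
  assumes "(g has_real_derivative g') (at ((norm p)\<^sup>2))"
  shows "((\<lambda>z. complex_of_real (g ((norm z)\<^sup>2))) has_derivative
    (\<lambda>w. of_real g' * (cinner p w + cinner w p))) (at p)"
proof -
  have "((\<lambda>z. g ((norm z)\<^sup>2)) has_derivative (\<lambda>w. 2 * inner p w * g')) (at p)"
    by (rule DERIV_compose_FDERIV[OF assms has_derivative_norm_power2])
  then have "((\<lambda>z. complex_of_real (g ((norm z)\<^sup>2))) has_derivative
      (\<lambda>w. of_real (2 * inner p w * g'))) (at p)"
    by (rule has_derivative_of_real)
  then show ?thesis
    by (rule has_derivative_eq_rhs) (simp add: fun_eq_iff mult.commute flip: of_real_inner_eq_cinner)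
qed

lemma i_ddbar_radial:
  fixes p :: "complex^'n::finite"
  assumes "open I" "(norm p)\<^sup>2 \<in> I"
    and g': "\<And>t. t \<in> I \<Longrightarrow> (g has_real_derivative g' t) (at t)"
    and g'': "(g' has_real_derivative g'') (at ((norm p)\<^sup>2))"
  shows "i_ddbar (\<lambda>z. g (sqnorm z)) p u v = radial_kahler (g' ((norm p)\<^sup>2)) g'' p u v"
proof -
  define U where "U = (\<lambda>y::complex^'n. (norm y)\<^sup>2) -` I"
  have "open U"
    unfolding U_def using assms(1) by (intro open_vimage continuous_intros)
  have "p \<in> U"
    unfolding U_def using assms(2) by simp
  have zbar: "wirt_zbar k (\<lambda>z. of_real (g (sqnorm z))) y = of_real (g' ((norm y)\<^sup>2)) * y$k"
    if "y \<in> U" for y k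
  proof (rule wirtinger_of_has_derivative(2)[where a = "\<lambda>l. of_real (g' ((norm y)\<^sup>2)) * cnj (y$l)"
        and b = "\<lambda>l. of_real (g' ((norm y)\<^sup>2)) * y$l"])
    show "((\<lambda>z. of_real (g (sqnorm z))) has_derivative
        (\<lambda>w. of_real (g' ((norm y)\<^sup>2)) * (cinner y w + cinner w y))) (at y)"
      using has_derivative_of_real_radial[OF g'] that unfolding U_def sqnorm_eq_norm_power2 by simp
    show "of_real (g' ((norm y)\<^sup>2)) * (cinner y w + cinner w y)
        = (\<Sum>l\<in>UNIV. of_real (g' ((norm y)\<^sup>2)) * cnj (y$l) * w$l
            + of_real (g' ((norm y)\<^sup>2)) * y$l * cnj (w$l))"
      for w
      by (simp add: cinner_def sum_distrib_left sum.distrib algebra_simps)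
  qed
  have "wirt_z j (wirt_zbar k (\<lambda>z. of_real (g (sqnorm z)))) p
      = (if j = k then of_real (g' ((norm p)\<^sup>2)) else 0) + of_real g'' * cnj (p$j) * p$k" for j k
  proof (rule wirtinger_of_has_derivative(1)[where
        a = "\<lambda>l. (if l = k then of_real (g' ((norm p)\<^sup>2)) else 0) + of_real g'' * cnj (p$l) * p$k"
        and b = "\<lambda>l. of_real g'' * p$l * p$k"])
    have "((\<lambda>y. of_real (g' ((norm y)\<^sup>2)) * y$k) has_derivative
        (\<lambda>w. of_real (g' ((norm p)\<^sup>2)) * w$k + of_real g'' * (cinner p w + cinner w p) * p$k)) (at p)"
      by (rule has_derivative_mult[OF has_derivative_of_real_radial[OF g'']
            bounded_linear.has_derivative[OF bounded_linear_vec_nth has_derivative_ident]])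
    then show "(wirt_zbar k (\<lambda>z. of_real (g (sqnorm z))) has_derivative
        (\<lambda>w. of_real (g' ((norm p)\<^sup>2)) * w$k + of_real g'' * (cinner p w + cinner w p) * p$k)) (at p)"
      by (rule has_derivative_transform_within_open[OF _ \<open>open U\<close> \<open>p \<in> U\<close>]) (simp add: zbar)
    show "of_real (g' ((norm p)\<^sup>2)) * w$k + of_real g'' * (cinner p w + cinner w p) * p$k
        = (\<Sum>l\<in>UNIV. ((if l = k then of_real (g' ((norm p)\<^sup>2)) else 0) + of_real g'' * cnj (p$l) * p$k) * w$l
            + of_real g'' * p$l * p$k * cnj (w$l))"
      for w
      by (simp add: distrib_right sum.distrib if_distrib[of "\<lambda>x. x * _"] cong: if_cong)
        (simp add: cinner_def sum_distrib_left sum_distrib_right sum.distrib algebra_simps)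
  qed
  then show ?thesis
    unfolding i_ddbar_def by (simp only: sum_wedge_eq_radial_kahler)
qed

lemma pullback_radial_map_radial_kahler:
  fixes p :: "complex^'n::finite"
  assumes \<phi>': "(\<phi> has_real_derivative \<phi>') (at ((norm p)\<^sup>2))"
    and \<omega>: "\<And>X Y. \<omega> (radial_map \<phi> p) X Y = radial_kahler a b (radial_map \<phi> p) X Y"
  shows "pullback (radial_map \<phi>) \<omega> p u v = radial_kahler (a * (\<phi> ((norm p)\<^sup>2))\<^sup>2)
      (2 * a * \<phi> ((norm p)\<^sup>2) * \<phi>'
        + b * (\<phi> ((norm p)\<^sup>2))^3 * (\<phi> ((norm p)\<^sup>2) + 2 * \<phi>' * (norm p)\<^sup>2)) p u v"
proof -
  define q where "q = (norm p)\<^sup>2"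
  define r where "r = \<phi> q"
  define DF where "DF = (\<lambda>u. r *\<^sub>R u + (2 * \<phi>' * Re (cinner u p)) *\<^sub>R p)"
  have "frechet_derivative (radial_map \<phi>) (at p) = (\<lambda>u. r *\<^sub>R u + (2 * \<phi>' * inner p u) *\<^sub>R p)"
    unfolding r_def q_def by (rule frechet_derivative_at[OF has_derivative_radial_map[OF \<phi>'], symmetric])
  also have "\<dots> = DF"
    unfolding DF_def Re_cinner by (simp add: inner_commute)
  finally have D: "frechet_derivative (radial_map \<phi>) (at p) = DF" .
  have F: "radial_map \<phi> p = r *\<^sub>R p"
    unfolding radial_map_def r_def q_def ..
  have "cinner v p = cnj (cinner p v)"
    by (simp add: cnj_cinner)
  then have DF_DF: "cinner (DF u) (DF v) = of_real (r * r) * cinner u v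
      + of_real (2 * r * \<phi>') * (of_real (Re (cinner p v)) * cinner u p + of_real (Re (cinner u p)) * cinner p v)
      + of_real (4 * \<phi>' * \<phi>' * q * Re (cinner u p) * Re (cinner p v))"
    and DF_F: "cinner (DF u) (r *\<^sub>R p)
      = of_real r * (of_real r * cinner u p + of_real (2 * \<phi>' * q * Re (cinner u p)))"
    and F_DF: "cinner (r *\<^sub>R p) (DF v)
      = of_real r * (of_real r * cinner p v + of_real (2 * \<phi>' * q * Re (cinner p v)))"
    unfolding DF_def q_def cinner_add_left cinner_add_right cinner_scaleR_left cinner_scaleR_right cinner_self
    by (simp_all add: algebra_simps)
  show ?thesis
    unfolding pullback_def D F \<omega>[unfolded F] radial_kahler_def DF_DF DF_F F_DF q_def[symmetric] r_def[symmetric]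
    by (simp add: algebra_simps power2_eq_square power3_eq_cube)
qed

section \<open>The map f\<close>

lemma fmap_eq_radial_map: "fmap = radial_map (\<lambda>t. 1 / sqrt (1 - t))"
  unfolding fun_eq_iff vec_eq_iff fmap_def radial_map_def vector_scaleR_component
  by (simp add: sqnorm_eq_norm_power2 scaleR_conv_of_real divide_inverse mult.commute)

definition fmap_inv :: "complex^'n::finite \<Rightarrow> complex^'n" where
  "fmap_inv = radial_map (\<lambda>t. 1 / sqrt (1 + t))"

lemma CH_eq: "CH = {z. (norm z)\<^sup>2 < 1}"
  by (simp add: CH_def sqnorm_eq_norm_power2)

lemma fmap_inv_fmap:
  assumes "z \<in> CH"
  shows "fmap_inv (fmap z) = z"
proof -
  define t where "t = (norm z)\<^sup>2"
  have t: "0 \<le> t" "t < 1"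
    using assms unfolding CH_eq t_def by auto
  have "1 + (1 / sqrt (1 - t))\<^sup>2 * t = 1 / (1 - t)"
    using t by (simp add: field_simps)
  then have "1 / sqrt (1 + (1 / sqrt (1 - t))\<^sup>2 * t) * (1 / sqrt (1 - t)) = 1"
    using t by (simp add: real_sqrt_divide)
  then show ?thesis
    unfolding fmap_inv_def fmap_eq_radial_map radial_map_radial_map t_def[symmetric] by simp
qed

lemma fmap_fmap_inv: "fmap (fmap_inv w) = w"
proof -
  define t where "t = (norm w)\<^sup>2"
  have t: "0 \<le> t"
    unfolding t_def by simp
  have "1 - (1 / sqrt (1 + t))\<^sup>2 * t = 1 / (1 + t)"
    using t by (simp add: field_simps)
  then have "1 / sqrt (1 - (1 / sqrt (1 + t))\<^sup>2 * t) * (1 / sqrt (1 + t)) = 1"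
    using t by (simp add: real_sqrt_divide)
  then show ?thesis
    unfolding fmap_inv_def fmap_eq_radial_map radial_map_radial_map t_def[symmetric] by simp
qed

lemma fmap_inv_in_CH: "fmap_inv w \<in> CH"
proof -
  have "(1 / sqrt (1 + (norm w)\<^sup>2))\<^sup>2 * (norm w)\<^sup>2 < 1"
    using add_pos_nonneg[of 1 "(norm w)\<^sup>2"] by (simp add: power_divide divide_less_eq)
  then show ?thesis
    unfolding CH_eq fmap_inv_def by (simp add: norm_radial_map)
qed

lemma bij_betw_fmap: "bij_betw fmap CH (UNIV :: (complex^'n::finite) set)"
  by (rule bij_betw_byWitness[where f' = fmap_inv]) (auto simp: fmap_inv_fmap fmap_fmap_inv fmap_inv_in_CH)

lemma inv_into_fmap: "inv_into CH fmap = fmap_inv"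
  using inv_into_f_eq[OF bij_betw_imp_inj_on[OF bij_betw_fmap] fmap_inv_in_CH fmap_fmap_inv] by blast

lemma smooth_on_fmap: "smooth_on fmap CH"
  using smooth_on_radial_map_inv_sqrt[of 1 "-1"] unfolding fmap_eq_radial_map CH_eq by simp

lemma smooth_on_fmap_inv: "smooth_on fmap_inv UNIV"
proof -
  have UNIV_eq: "{z::complex^'n. 0 < 1 + (norm z)\<^sup>2} = UNIV"
    by (auto intro: add_pos_nonneg)
  show ?thesis
    using smooth_on_radial_map_inv_sqrt[of 1 1, where 'a = "complex^'n"] unfolding fmap_inv_def
    by (simp add: UNIV_eq)
qed

lemma diffeo_between_fmap: "diffeo_between fmap CH (UNIV :: (complex^'n::finite) set)"
  unfolding diffeo_between_def inv_into_fmap using bij_betw_fmap smooth_on_fmap smooth_on_fmap_inv by blast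

lemma special_on_fmap: "special_on CH fmap"
  unfolding special_on_def
proof (intro conjI smooth_on_fmap exI[of _ "\<lambda>j x. 1 / sqrt (1 - (\<Sum>i\<in>UNIV. x$i))"] ballI)
  show "fmap z = (\<chi> j. complex_of_real (1 / sqrt (1 - (\<Sum>i\<in>UNIV. (\<chi> i. (cmod (z$i))\<^sup>2) $ i))) * z$j)"
    for z :: "complex^'n"
    unfolding fmap_def sqnorm_def by (simp add: vec_eq_iff divide_inverse mult.commute)
qed

lemma has_real_derivative_fmap_profile:
  "t < 1 \<Longrightarrow> ((\<lambda>t. 1 / sqrt (1 - t)) has_real_derivative 1 / (2 * sqrt (1 - t)^3)) (at t)"
  by (rule derivative_eq_intros refl | simp)+ (simp add: power3_eq_cube field_simps)

lemma omega_hyp_eq_radial_kahler: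
  assumes "p \<in> CH"
  shows "omega_hyp p u v = radial_kahler (1 / (1 - (norm p)\<^sup>2)) (1 / (1 - (norm p)\<^sup>2)\<^sup>2) p u v"
proof -
  have q: "(norm p)\<^sup>2 < 1"
    using assms unfolding CH_eq by simp
  have "((\<lambda>t. ln (1 - t)) has_real_derivative - 1 / (1 - t)) (at t)" if "t < 1" for t
    using that by (auto intro!: derivative_eq_intros)
  moreover have "((\<lambda>t. - 1 / (1 - t)) has_real_derivative - 1 / (1 - (norm p)\<^sup>2)\<^sup>2) (at ((norm p)\<^sup>2))"
    using q by (auto intro!: derivative_eq_intros simp: power2_eq_square)
  ultimately have "i_ddbar (\<lambda>z. ln (1 - sqnorm z)) p u v
      = radial_kahler (- 1 / (1 - (norm p)\<^sup>2)) (- 1 / (1 - (norm p)\<^sup>2)\<^sup>2) p u v"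
    using q
    by (intro i_ddbar_radial[where I = "{..<1}" and g = "\<lambda>t. ln (1 - t)" and g' = "\<lambda>t. - 1 / (1 - t)"])
      auto
  then show ?thesis
    unfolding omega_hyp_def radial_kahler_def by simp
qed

lemma pullback_fmap_omega0:
  assumes "p \<in> CH"
  shows "pullback fmap omega0 p u v = omega_hyp p u v"
proof -
  define R where "R = sqrt (1 - (norm p)\<^sup>2)"
  have R: "0 < R" "R\<^sup>2 = 1 - (norm p)\<^sup>2"
    using assms unfolding R_def CH_eq by simp_all
  have "pullback fmap omega0 p u v = radial_kahler (1 * (1 / R)\<^sup>2)
      (2 * 1 * (1 / R) * (1 / (2 * R^3)) + 0 * (1 / R)^3 * (1 / R + 2 * (1 / (2 * R^3)) * (norm p)\<^sup>2)) p u v"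
    unfolding fmap_eq_radial_map R_def
    by (rule pullback_radial_map_radial_kahler[where \<phi> = "\<lambda>t. 1 / sqrt (1 - t)" and \<omega> = omega0,
          OF has_real_derivative_fmap_profile omega0_eq_radial_kahler])
      (use assms in \<open>simp add: CH_eq\<close>)
  also have "1 * (1 / R)\<^sup>2 = 1 / (1 - (norm p)\<^sup>2)"
    using R by (simp add: power_divide)
  also have "2 * 1 * (1 / R) * (1 / (2 * R^3)) + 0 * (1 / R)^3 * (1 / R + 2 * (1 / (2 * R^3)) * (norm p)\<^sup>2)
      = 1 / (1 - (norm p)\<^sup>2)\<^sup>2"
    using R by (simp flip: R(2)) (simp add: field_simps eval_nat_numeral)
  finally show ?thesis
    using omega_hyp_eq_radial_kahler[OF assms] by simp
qed

lemma omega_FS_eq_radial_kahler: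
  "omega_FS w X Y = radial_kahler (1 / (1 + (norm w)\<^sup>2)) (- 1 / (1 + (norm w)\<^sup>2)\<^sup>2) w X Y"
proof -
  have "((\<lambda>t. ln (1 + t)) has_real_derivative 1 / (1 + t)) (at t)" if "- 1 < t" for t
    using that by (auto intro!: derivative_eq_intros)
  moreover have "((\<lambda>t. 1 / (1 + t)) has_real_derivative - 1 / (1 + (norm w)\<^sup>2)\<^sup>2) (at ((norm w)\<^sup>2))"
    by (auto intro!: derivative_eq_intros simp: power2_eq_square add_nonneg_eq_0_iff)
  ultimately show ?thesis
    unfolding omega_FS_def
    by (intro i_ddbar_radial[where I = "{- 1<..}" and g = "\<lambda>t. ln (1 + t)" and g' = "\<lambda>t. 1 / (1 + t)"])
      (auto intro: less_le_trans[of _ 0])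
qed

lemma pullback_fmap_omega_FS:
  assumes "p \<in> CH"
  shows "pullback fmap omega_FS p u v = omega0 p u v"
proof -
  define R where "R = sqrt (1 - (norm p)\<^sup>2)"
  define s where "s = (norm (fmap p))\<^sup>2"
  have R: "0 < R" "R\<^sup>2 = 1 - (norm p)\<^sup>2"
    using assms unfolding R_def CH_eq by simp_all
  have s: "1 + s = 1 / R\<^sup>2"
    using R assms unfolding s_def fmap_eq_radial_map norm_radial_map R_def[symmetric] CH_eq
    by (simp add: power_divide field_simps)
  have "pullback fmap omega_FS p u v = radial_kahler (1 / (1 + s) * (1 / R)\<^sup>2)
      (2 * (1 / (1 + s)) * (1 / R) * (1 / (2 * R^3))
        + - 1 / (1 + s)\<^sup>2 * (1 / R)^3 * (1 / R + 2 * (1 / (2 * R^3)) * (norm p)\<^sup>2)) p u v"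
    unfolding s_def fmap_eq_radial_map R_def
    by (rule pullback_radial_map_radial_kahler[where \<phi> = "\<lambda>t. 1 / sqrt (1 - t)" and \<omega> = omega_FS,
          OF has_real_derivative_fmap_profile omega_FS_eq_radial_kahler])
      (use assms in \<open>simp add: CH_eq\<close>)
  also have "1 / (1 + s) * (1 / R)\<^sup>2 = 1"
    using R(1) unfolding s by (simp add: power_divide)
  also have "2 * (1 / (1 + s)) * (1 / R) * (1 / (2 * R^3))
      + - 1 / (1 + s)\<^sup>2 * (1 / R)^3 * (1 / R + 2 * (1 / (2 * R^3)) * (norm p)\<^sup>2) = 0"
    using R unfolding s by (simp add: field_simps eval_nat_numeral)
  finally show ?thesis
    by (simp add: omega0_eq_radial_kahler)
qed

theorem lemma2p2:
  shows "special_on (CH :: (complex^'n::finite) set) fmap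
    \<and> diffeo_between (fmap :: complex^'n \<Rightarrow> complex^'n) CH UNIV
    \<and> (\<forall>p\<in>(CH :: (complex^'n) set). \<forall>u v. pullback fmap omega0 p u v = omega_hyp p u v)
    \<and> (\<forall>p\<in>(CH :: (complex^'n) set). \<forall>u v. pullback fmap omega_FS p u v = omega0 p u v)"
  using special_on_fmap diffeo_between_fmap pullback_fmap_omega0 pullback_fmap_omega_FS by blast

end
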